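(* For $a,b\ge1$ and $P=[a]\times[b]$, we have $\sum_{p\in P}\mathbb{1}_p\equiv \frac{ab}{2}$.
   Context: $[a]\times[b]=\{(i,j)\colon 1\le i\le a,\ 1\le j\le b\}$ with $(i,j)\le(i',j')$ iff $i\le i'$ and $j\le j'$. $\mathcal{J}(P)$ is the set of order ideals of $P$. For $x\in P$, $I\in\mathcal{J}(P)$: $\mathbb{1}_x(I)=1$ if $x\in I$, else $0$; $T_x^+(I)=1$ if $x$ is a minimal element of $P\setminus I$, else $0$; $T_x^-(I)=1$ if $x$ is a maximal element of $I$, else $0$; $T_x=T_x^+-T_x^-$. For $f,g\colon\mathcal{J}(P)\to\mathbb{R}$, $f\equiv g$ means $f-g=\sum_{x\in P}c_xT_x$ for some real constants $c_x$; a real number denotes the corresponding constant function. *)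

theory Defs
  imports Main "HOL-Library.Indicator_Function"
begin

definition grid :: "nat \<Rightarrow> nat \<Rightarrow> (nat \<times> nat) set" where
  "grid a b = {(i, j). 1 \<le> i \<and> i \<le> a \<and> 1 \<le> j \<and> j \<le> b}"

definition grid_le :: "nat \<times> nat \<Rightarrow> nat \<times> nat \<Rightarrow> bool" where
  "grid_le x y \<longleftrightarrow> fst x \<le> fst y \<and> snd x \<le> snd y"

definition order_ideals :: "'a set \<Rightarrow> ('a \<Rightarrow> 'a \<Rightarrow> bool) \<Rightarrow> 'a set set" where
  "order_ideals P le = {I. I \<subseteq> P \<and> (\<forall>x\<in>I. \<forall>y\<in>P. le y x \<longrightarrow> y \<in> I)}"

definition ind :: "'a \<Rightarrow> 'a set \<Rightarrow> real" where
  "ind x I = (if x \<in> I then 1 else 0)"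

definition toggle_plus :: "'a set \<Rightarrow> ('a \<Rightarrow> 'a \<Rightarrow> bool) \<Rightarrow> 'a \<Rightarrow> 'a set \<Rightarrow> real" where
  "toggle_plus P le x I =
     (if x \<in> P - I \<and> (\<forall>y\<in>P - I. le y x \<longrightarrow> y = x) then 1 else 0)"

definition toggle_minus :: "'a set \<Rightarrow> ('a \<Rightarrow> 'a \<Rightarrow> bool) \<Rightarrow> 'a \<Rightarrow> 'a set \<Rightarrow> real" where
  "toggle_minus P le x I =
     (if x \<in> I \<and> (\<forall>y\<in>I. le x y \<longrightarrow> y = x) then 1 else 0)"

definition toggle :: "'a set \<Rightarrow> ('a \<Rightarrow> 'a \<Rightarrow> bool) \<Rightarrow> 'a \<Rightarrow> 'a set \<Rightarrow> real" where
  "toggle P le x I = toggle_plus P le x I - toggle_minus P le x I"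

definition toggle_equiv ::
  "'a set \<Rightarrow> ('a \<Rightarrow> 'a \<Rightarrow> bool) \<Rightarrow> ('a set \<Rightarrow> real) \<Rightarrow> ('a set \<Rightarrow> real) \<Rightarrow> bool" where
  "toggle_equiv P le f g \<longleftrightarrow>
     (\<exists>c :: 'a \<Rightarrow> real. \<forall>I\<in>order_ideals P le.
        f I - g I = (\<Sum>x\<in>P. c x * toggle P le x I))"

end

theory Submission
  imports Defs
begin

(* An order ideal I of [a] x [b] is determined by its row lengths L_1 >= ... >= L_a, and
   the sum of the indicators is L_1 + ... + L_a. In row i at most two toggles are nonzero:
   T^+ at (i, L_i + 1) if the row can grow (L_i < L_(i-1), with L_0 = b) and T^- at (i, L_i)
   if it can shrink (L_(i+1) < L_i). Give (i, j) the coefficient C(j - i), where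
   C(e) = (a + e)(e - b)/2. As C(e + 1) - C(e) = e + (a - b + 1)/2, row i then contributes
   L_i - i + (a - b + 1)/2 up to a telescoping difference whose end terms vanish because
   C(b) = C(-a) = 0; summing over the rows leaves L_1 + ... + L_a - ab/2. *)

lemma downward_closed_eq_atLeastAtMost_card:
  fixes S :: "nat set"
  assumes "finite S" and "0 \<notin> S"
    and down: "\<And>k k'. k \<in> S \<Longrightarrow> 0 < k' \<Longrightarrow> k' \<le> k \<Longrightarrow> k' \<in> S"
  shows "S = {1..card S}"
proof (cases "S = {}")
  case False
  have "S = {1..Max S}"
    using assms Max_ge[OF \<open>finite S\<close>] Max_in[OF \<open>finite S\<close> False]
    by (auto simp: Suc_le_eq intro: down gr0I)
  then show ?thesis by (metis card_atLeastAtMost diff_Suc_1)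
qed simp

lemma sum_grid: "(\<Sum>x\<in>grid a b. f x) = (\<Sum>i=1..a. \<Sum>j=1..b. f (i, j))"
proof -
  have "grid a b = {1..a} \<times> {1..b}"
    by (auto simp: grid_def)
  then show ?thesis
    by (simp add: sum.cartesian_product)
qed

definition diag_coeff :: "nat \<Rightarrow> nat \<Rightarrow> real \<Rightarrow> real" where
  "diag_coeff a b e = (real a + e) * (e - real b) / 2"

lemma diag_coeff_Suc_diff: "diag_coeff a b (e + 1) - diag_coeff a b e = e + (real a - real b + 1) / 2"
  by (simp add: diag_coeff_def field_simps)

locale grid_ideal =
  fixes a b :: nat and I :: "(nat \<times> nat) set"
  assumes ideal: "I \<in> order_ideals (grid a b) grid_le"
begin

lemma ideal_subset_grid: "I \<subseteq> grid a b"
  using ideal by (simp add: order_ideals_def)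

lemma ideal_down_closed:
  assumes "(i, j) \<in> I" and "0 < i'" and "0 < j'" and "i' \<le> i" and "j' \<le> j"
  shows "(i', j') \<in> I"
proof -
  have "(i', j') \<in> grid a b"
    using assms ideal_subset_grid by (auto simp: grid_def)
  with assms(1,4,5) ideal show ?thesis
    by (auto simp: order_ideals_def grid_le_def)
qed

(* The fictitious row 0 has full length b, so that the first row can grow iff it is shorter
   than row 0, like any other row. *)
definition row_len :: "nat \<Rightarrow> nat" where
  "row_len i = (if i = 0 then b else card {j. (i, j) \<in> I})"

lemma row_eq_atLeastAtMost: "0 < i \<Longrightarrow> {j. (i, j) \<in> I} = {1..row_len i}"
proof -
  assume "0 < i"
  have "{j. (i, j) \<in> I} \<subseteq> {1..b}"
    using ideal_subset_grid by (auto simp: grid_def)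
  then have "{j. (i, j) \<in> I} = {1..card {j. (i, j) \<in> I}}"
    by (intro downward_closed_eq_atLeastAtMost_card)
      (auto intro: finite_subset ideal_down_closed[OF _ \<open>0 < i\<close>])
  with \<open>0 < i\<close> show ?thesis by (simp add: row_len_def)
qed

lemma mem_ideal_iff: "0 < i \<Longrightarrow> 0 < j \<Longrightarrow> (i, j) \<in> I \<longleftrightarrow> j \<le> row_len i"
  using row_eq_atLeastAtMost[of i] by auto

lemma row_len_le: "row_len i \<le> b"
proof (cases "i = 0")
  case False
  have "{j. (i, j) \<in> I} \<subseteq> {1..b}"
    using ideal_subset_grid by (auto simp: grid_def)
  then have "card {j. (i, j) \<in> I} \<le> card {1..b}"
    by (rule card_mono[rotated]) simp
  with False show ?thesis by (simp add: row_len_def)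
qed (simp add: row_len_def)

lemma row_len_above: "a < i \<Longrightarrow> row_len i = 0"
  using ideal_subset_grid mem_ideal_iff[of i 1] by (auto simp: grid_def)

lemma decseq_row_len: "decseq row_len"
proof (rule decseq_SucI)
  fix i
  show "row_len (Suc i) \<le> row_len i"
  proof (cases "i = 0")
    case True
    then show ?thesis using row_len_le[of 1] by (simp add: row_len_def)
  next
    case False
    show ?thesis
    proof (cases "row_len (Suc i) = 0")
      case nonempty: False
      then have "(Suc i, row_len (Suc i)) \<in> I"
        by (simp add: mem_ideal_iff)
      then have "(i, row_len (Suc i)) \<in> I"
        using \<open>i \<noteq> 0\<close> nonempty by (auto intro: ideal_down_closed)
      with \<open>i \<noteq> 0\<close> nonempty show ?thesis by (simp add: mem_ideal_iff)
    qed simp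
  qed
qed

lemmas row_len_antimono = decseqD[OF decseq_row_len]

lemma toggle_plus_grid:
  assumes "(i, j) \<in> grid a b"
  shows "toggle_plus (grid a b) grid_le (i, j) I =
    (if j = row_len i + 1 \<and> row_len i < row_len (i - 1) then 1 else 0)"
proof -
  from assms have "0 < i" "0 < j" "j \<le> b" by (auto simp: grid_def)
  have "(i, j) \<in> grid a b - I \<and> (\<forall>y\<in>grid a b - I. grid_le y (i, j) \<longrightarrow> y = (i, j)) \<longleftrightarrow>
    j = row_len i + 1 \<and> row_len i < row_len (i - 1)"
  proof
    assume min: "(i, j) \<in> grid a b - I \<and> (\<forall>y\<in>grid a b - I. grid_le y (i, j) \<longrightarrow> y = (i, j))"
    then have below: "y \<in> I" if "y \<in> grid a b" "grid_le y (i, j)" "y \<noteq> (i, j)" for y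
      using that by blast
    from min have "row_len i < j"
      using \<open>0 < i\<close> \<open>0 < j\<close> by (simp add: mem_ideal_iff)
    have "j = row_len i + 1"
    proof (rule ccontr)
      assume "j \<noteq> row_len i + 1"
      then have "(i, j - 1) \<in> grid a b" "(i, j - 1) \<notin> I"
        using assms \<open>row_len i < j\<close> \<open>0 < i\<close> by (auto simp: grid_def mem_ideal_iff)
      with below[of "(i, j - 1)"] \<open>0 < j\<close> show False by (simp add: grid_le_def)
    qed
    moreover have "row_len i < row_len (i - 1)"
    proof (cases "i = 1")
      case True
      with \<open>row_len i < j\<close> \<open>j \<le> b\<close> show ?thesis by (simp add: row_len_def)
    next
      case False
      then have "(i - 1, j) \<in> grid a b"
        using assms by (auto simp: grid_def)
      with below \<open>0 < i\<close> have "(i - 1, j) \<in> I"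
        by (simp add: grid_le_def)
      with False \<open>0 < i\<close> \<open>0 < j\<close> \<open>j = row_len i + 1\<close> show ?thesis
        by (simp add: mem_ideal_iff)
    qed
    ultimately show "j = row_len i + 1 \<and> row_len i < row_len (i - 1)" ..
  next
    assume corner: "j = row_len i + 1 \<and> row_len i < row_len (i - 1)"
    have "y = (i, j)" if "y \<in> grid a b - I" and "grid_le y (i, j)" for y
    proof -
      obtain i' j' where y: "y = (i', j')" by fastforce
      with that have "0 < i'" "0 < j'" "i' \<le> i" "j' \<le> j" "row_len i' < j'"
        by (auto simp: grid_def grid_le_def mem_ideal_iff)
      moreover have "row_len i \<le> row_len i'"
        using \<open>i' \<le> i\<close> by (rule row_len_antimono)
      moreover have "\<not> row_len (i - 1) \<le> row_len i'"
        using calculation corner by linarith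
      then have "\<not> i' \<le> i - 1"
        using row_len_antimono by blast
      ultimately show ?thesis
        using y corner by simp
    qed
    moreover have "(i, j) \<notin> I"
      using corner \<open>0 < i\<close> \<open>0 < j\<close> by (simp add: mem_ideal_iff)
    ultimately show "(i, j) \<in> grid a b - I \<and> (\<forall>y\<in>grid a b - I. grid_le y (i, j) \<longrightarrow> y = (i, j))"
      using assms by blast
  qed
  then show ?thesis by (simp add: toggle_plus_def)
qed

lemma toggle_minus_grid:
  assumes "(i, j) \<in> grid a b"
  shows "toggle_minus (grid a b) grid_le (i, j) I =
    (if j = row_len i \<and> row_len (i + 1) < row_len i then 1 else 0)"
proof -
  from assms have "0 < i" "0 < j" by (auto simp: grid_def)
  have "(i, j) \<in> I \<and> (\<forall>y\<in>I. grid_le (i, j) y \<longrightarrow> y = (i, j)) \<longleftrightarrow>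
    j = row_len i \<and> row_len (i + 1) < row_len i"
  proof
    assume max: "(i, j) \<in> I \<and> (\<forall>y\<in>I. grid_le (i, j) y \<longrightarrow> y = (i, j))"
    then have "j \<le> row_len i"
      using \<open>0 < i\<close> \<open>0 < j\<close> by (simp add: mem_ideal_iff)
    have "(i, j + 1) \<notin> I" and "(i + 1, j) \<notin> I"
      using max by (auto simp: grid_le_def)
    with \<open>j \<le> row_len i\<close> \<open>0 < i\<close> \<open>0 < j\<close> show "j = row_len i \<and> row_len (i + 1) < row_len i"
      by (simp add: mem_ideal_iff)
  next
    assume corner: "j = row_len i \<and> row_len (i + 1) < row_len i"
    have "y = (i, j)" if "y \<in> I" and "grid_le (i, j) y" for y
    proof -
      obtain i' j' where y: "y = (i', j')" by fastforce
      with that \<open>0 < i\<close> \<open>0 < j\<close> have "i \<le> i'" "j \<le> j'" "j' \<le> row_len i'"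
        by (auto simp: grid_le_def mem_ideal_iff)
      moreover have "row_len i' \<le> row_len i"
        using \<open>i \<le> i'\<close> by (rule row_len_antimono)
      moreover have "\<not> row_len i' \<le> row_len (i + 1)"
        using calculation corner by linarith
      then have "\<not> i + 1 \<le> i'"
        using row_len_antimono by blast
      ultimately show ?thesis
        using y corner by simp
    qed
    moreover have "(i, j) \<in> I"
      using corner \<open>0 < i\<close> \<open>0 < j\<close> by (simp add: mem_ideal_iff)
    ultimately show "(i, j) \<in> I \<and> (\<forall>y\<in>I. grid_le (i, j) y \<longrightarrow> y = (i, j))"
      by blast
  qed
  then show ?thesis by (simp add: toggle_minus_def)
qed

lemma row_toggle_sum:
  assumes "0 < i" and "i \<le> a"
  shows "(\<Sum>j=1..b. f j * toggle (grid a b) grid_le (i, j) I) =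
    (if row_len i < row_len (i - 1) then f (row_len i + 1) else 0) -
    (if row_len (i + 1) < row_len i then f (row_len i) else 0)"
proof -
  have grid: "(i, j) \<in> grid a b" if "j \<in> {1..b}" for j
    using assms that by (simp add: grid_def)
  have "(\<Sum>j=1..b. f j * toggle_plus (grid a b) grid_le (i, j) I) =
    (\<Sum>j=1..b. if row_len i < row_len (i - 1) then (if j = row_len i + 1 then f j else 0) else 0)"
    by (rule sum.cong) (simp_all add: toggle_plus_grid[OF grid])
  also have "\<dots> = (if row_len i < row_len (i - 1) then f (row_len i + 1) else 0)"
    using row_len_le[of "i - 1"] by simp
  finally have plus: "(\<Sum>j=1..b. f j * toggle_plus (grid a b) grid_le (i, j) I) =
    (if row_len i < row_len (i - 1) then f (row_len i + 1) else 0)" .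
  have "(\<Sum>j=1..b. f j * toggle_minus (grid a b) grid_le (i, j) I) =
    (\<Sum>j=1..b. if row_len (i + 1) < row_len i then (if j = row_len i then f j else 0) else 0)"
    by (rule sum.cong) (simp_all add: toggle_minus_grid[OF grid])
  also have "\<dots> = (if row_len (i + 1) < row_len i then f (row_len i) else 0)"
    using row_len_le[of i] by simp
  finally have minus: "(\<Sum>j=1..b. f j * toggle_minus (grid a b) grid_le (i, j) I) =
    (if row_len (i + 1) < row_len i then f (row_len i) else 0)" .
  show ?thesis
    by (simp only: toggle_def right_diff_distrib sum_subtractf plus minus)
qed

lemma row_sum_ind: "0 < i \<Longrightarrow> (\<Sum>j=1..b. ind (i, j) I) = real (row_len i)"
proof -
  assume "0 < i"
  then have "{j \<in> {1..b}. (i, j) \<in> I} = {1..row_len i}"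
    using row_eq_atLeastAtMost[of i] row_len_le[of i] by auto
  then show ?thesis
    by (simp add: ind_def flip: sum.inter_filter)
qed

lemma sum_ind_eq_sum_row_len: "(\<Sum>p\<in>grid a b. ind p I) = (\<Sum>i=1..a. real (row_len i))"
  unfolding sum_grid by (intro sum.cong refl row_sum_ind) simp

definition row_potential :: "nat \<Rightarrow> real" where
  "row_potential i =
    (if row_len (i + 1) < row_len i then 0 else diag_coeff a b (real (row_len i) - real i))"

lemma row_potential_0: "row_potential 0 = 0"
  by (simp add: row_potential_def row_len_def diag_coeff_def)

lemma row_potential_last: "row_potential a = 0"
  using row_len_above[of "a + 1"] by (simp add: row_potential_def diag_coeff_def)

lemma row_weighted_toggle_sum:
  assumes "0 < i" and "i \<le> a"
  shows "(\<Sum>j=1..b. diag_coeff a b (real j - real i) * toggle (grid a b) grid_le (i, j) I) =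
    real (row_len i) - real i + (real a - real b + 1) / 2 + (row_potential i - row_potential (i - 1))"
proof -
  have "row_len i \<le> row_len (i - 1)"
    by (simp add: row_len_antimono)
  with \<open>0 < i\<close> have entering:
    "(if row_len i < row_len (i - 1) then diag_coeff a b (real (row_len i + 1) - real i) else 0)
      + row_potential (i - 1) = diag_coeff a b (real (row_len i) - real i + 1)"
    by (auto simp: row_potential_def algebra_simps)
  have leaving:
    "(if row_len (i + 1) < row_len i then diag_coeff a b (real (row_len i) - real i) else 0)
      + row_potential i = diag_coeff a b (real (row_len i) - real i)"
    by (simp add: row_potential_def)
  show ?thesis
    using row_toggle_sum[OF assms, of "\<lambda>j. diag_coeff a b (real j - real i)"] entering leaving
      diag_coeff_Suc_diff[of a b "real (row_len i) - real i"]
    by simp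
qed

lemma weighted_toggle_sum:
  "(\<Sum>(i, j)\<in>grid a b. diag_coeff a b (real j - real i) * toggle (grid a b) grid_le (i, j) I) =
    (\<Sum>p\<in>grid a b. ind p I) - real a * real b / 2"
proof -
  have "(\<Sum>(i, j)\<in>grid a b. diag_coeff a b (real j - real i) * toggle (grid a b) grid_le (i, j) I) =
    (\<Sum>i=1..a. real (row_len i) - real i + (real a - real b + 1) / 2
      + (row_potential i - row_potential (i - 1)))"
    unfolding sum_grid prod.case by (intro sum.cong refl row_weighted_toggle_sum) auto
  also have "\<dots> = (\<Sum>i=1..a. real (row_len i)) - (\<Sum>i=1..a. real i)
      + real a * (real a - real b + 1) / 2"
    using sum_telescope''[of 0 a row_potential]
    by (simp add: sum.distrib sum_subtractf row_potential_0 row_potential_last)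
  also have "\<dots> = (\<Sum>p\<in>grid a b. ind p I) - real a * real b / 2"
    using double_gauss_sum_from_Suc_0[of a, where ?'a = real]
    by (simp add: sum_ind_eq_sum_row_len field_simps)
  finally show ?thesis .
qed

end

theorem corollary3p11:
  fixes a b :: nat
  assumes "a \<ge> 1" and "b \<ge> 1"
  shows "toggle_equiv (grid a b) grid_le
           (\<lambda>I. \<Sum>p\<in>grid a b. ind p I) (\<lambda>I. real a * real b / 2)"
  unfolding toggle_equiv_def
proof (intro exI ballI)
  fix I
  assume "I \<in> order_ideals (grid a b) grid_le"
  then interpret grid_ideal a b I
    by unfold_locales
  show "(\<Sum>p\<in>grid a b. ind p I) - real a * real b / 2 =
    (\<Sum>x\<in>grid a b. (\<lambda>(i, j). diag_coeff a b (real j - real i)) x * toggle (grid a b) grid_le x I)"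
    using weighted_toggle_sum by (simp add: case_prod_beta)
qed

end
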